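(* Let $\sigma_0$ be a strictly positive random variable with $L(x):=1/\mathbb{P}(\sigma_0>x)$ slowly varying at infinity (i.e. $\lim_{u\to\infty}L(uv)/L(u)=1$ for every $v>0$), and let $Y=\{Y_n\}_{n\in\mathbb{N}}$ be i.i.d. with the law of $\sigma_0$. Let $h_t$ be any function with $h_t\to\infty$, $h_t^2=o(r_t)$, and such that, for all sufficiently large $t$, \[ L(\ell_t/h_t^3)>L(\ell_t)(1-1/h_t)\quad\text{and}\quad L(\ell_th_t^3)<L(\ell_t)(1+1/h_t).\] Then, as $t\to\infty$, \[ \mathbb{P}\Big(s_{\ell_t}<\frac{t}{2r_th_t^2}\Big)\to1.\]
   Context: $\ell_t:=\min\{s\ge0: sL(s)\ge t\}$ and $r_t:=L(\ell_t)$. For $n\ge0$, $M_n:=\max\{Y_i: i\le\lfloor n\rfloor\}$. For a level $l>0$, $n_l:=\min\{n\in\mathbb{N}: M_n>l\}$ is the index of the first exceedance of $l$, and $s_l:=\sum_{i<n_l}Y_i$. *)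

theory Defs
  imports "HOL-Probability.Probability" "HOL-Library.Landau_Symbols"
begin

definition tailL :: "'a measure \<Rightarrow> ('a \<Rightarrow> real) \<Rightarrow> real \<Rightarrow> real" where
  "tailL M X x = 1 / measure M {\<omega> \<in> space M. X \<omega> > x}"

definition slowly_varying :: "(real \<Rightarrow> real) \<Rightarrow> bool" where
  "slowly_varying L \<longleftrightarrow> (\<forall>v>0. ((\<lambda>u. L (u * v) / L u) \<longlongrightarrow> 1) at_top)"

text \<open>ell_t := min { s >= 0 : s L(s) >= t } (the minimum is attained, rendered as Inf)\<close>
definition ell :: "(real \<Rightarrow> real) \<Rightarrow> real \<Rightarrow> real" where
  "ell L t = Inf {s. 0 \<le> s \<and> t \<le> s * L s}"

definition rr :: "(real \<Rightarrow> real) \<Rightarrow> real \<Rightarrow> real" where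
  "rr L t = L (ell L t)"

definition maxY :: "(nat \<Rightarrow> 'a \<Rightarrow> real) \<Rightarrow> nat \<Rightarrow> 'a \<Rightarrow> real" where
  "maxY Y n \<omega> = Max {Y i \<omega> | i. i \<le> n}"

definition first_exc :: "(nat \<Rightarrow> 'a \<Rightarrow> real) \<Rightarrow> real \<Rightarrow> 'a \<Rightarrow> nat" where
  "first_exc Y l \<omega> = (LEAST n. maxY Y n \<omega> > l)"

definition sl :: "(nat \<Rightarrow> 'a \<Rightarrow> real) \<Rightarrow> real \<Rightarrow> 'a \<Rightarrow> real" where
  "sl Y l \<omega> = (\<Sum>i < first_exc Y l \<omega>. Y i \<omega>)"

end

theory Submission
  imports Defs
begin

text \<open>Write \<open>l = \<ell>\<^sub>t\<close>, \<open>r = L l\<close> and \<open>a = l / h\<^sup>3\<close>. If, among the first \<open>N \<approx> r \<surd>h\<close> variables,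
  the first one exceeding \<open>a\<close> already exceeds \<open>l\<close>, then it is the first exceedance of \<open>l\<close>, and
  \<open>s\<^sub>l\<close> is at most the sum of the first \<open>N\<close> variables truncated at \<open>a\<close>. That event has
  probability \<open>(L a / r) (1 - (1 - 1 / L a)\<^sup>N) \<ge> 1 - 1/h - exp (-\<surd>h)\<close> by the hypothesis on
  \<open>L (l / h\<^sup>3)\<close>. Since \<open>L\<close> grows by at most 10% per doubling on large scales, the truncated mean
  \<open>E[\<sigma>\<^sub>0; \<sigma>\<^sub>0 \<le> a]\<close> is \<open>O(1) + O(a / L a)\<close>, so by Markov's inequality the truncated sum exceeds
  \<open>l / (8 h\<^sup>2) \<le> t / (2 r h\<^sup>2)\<close> with probability \<open>O(r\<^sup>3 / l + 1 / \<surd>h)\<close>. Slow variation gives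
  \<open>L(l)\<^sup>3 / l \<rightarrow> 0\<close>, so every error term vanishes as \<open>t \<rightarrow> \<infinity>\<close>.\<close>

section \<open>Dyadic scales and slowly varying functions\<close>

lemma dyadic_induct [consumes 1, case_names base step]:
  fixes c x :: real
  assumes "c > 0"
    and base: "\<And>x. x \<le> 2 * c \<Longrightarrow> P x"
    and step: "\<And>x. 2 * c < x \<Longrightarrow> P (x / 2) \<Longrightarrow> P x"
  shows "P x"
proof -
  have "\<forall>x. x \<le> 2 ^ Suc n * c \<longrightarrow> P x" for n
  proof (induction n)
    case 0
    then show ?case using base by simp
  next
    case (Suc n)
    show ?case
    proof (intro allI impI)
      fix x assume "x \<le> 2 ^ Suc (Suc n) * c"
      then show "P x"
        using Suc.IH base step[of x] by (cases "x \<le> 2 * c") auto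
    qed
  qed
  moreover obtain n where "x / c < 2 ^ n"
    using real_arch_pow[of 2 "x / c"] by auto
  then have "x \<le> 2 ^ Suc n * c"
    using \<open>c > 0\<close> by (simp add: field_simps)
      (smt (verit) mult_left_mono one_le_power)
  ultimately show ?thesis by blast
qed

lemma dyadic_contraction_tendsto_0:
  fixes \<phi> :: "real \<Rightarrow> real" and c \<rho> B :: real
  assumes "c > 0" "0 \<le> \<rho>" "\<rho> < 1"
    and nonneg: "\<And>x. c \<le> x \<Longrightarrow> 0 \<le> \<phi> x"
    and bounded: "\<And>x. c \<le> x \<Longrightarrow> x \<le> 2 * c \<Longrightarrow> \<phi> x \<le> B"
    and contraction: "\<And>x. c \<le> x \<Longrightarrow> \<phi> (2 * x) \<le> \<rho> * \<phi> x"
  shows "(\<phi> \<longlongrightarrow> 0) at_top"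
proof -
  have le_B: "c \<le> x \<longrightarrow> \<phi> x \<le> B" for x
    using \<open>c > 0\<close>
  proof (induction x rule: dyadic_induct)
    case (step x)
    then have "c \<le> x / 2" using \<open>c > 0\<close> by simp
    have "\<phi> x \<le> \<rho> * \<phi> (x / 2)" using contraction[of "x / 2"] \<open>c \<le> x / 2\<close> by simp
    also have "\<dots> \<le> \<phi> (x / 2)"
      using nonneg[OF \<open>c \<le> x / 2\<close>] assms(2,3) by (simp add: mult_left_le_one_le)
    also have "\<dots> \<le> B" using step.IH \<open>c \<le> x / 2\<close> by simp
    finally show ?case by simp
  qed (use bounded in auto)
  have decay: "2 ^ n * c \<le> x \<Longrightarrow> \<phi> x \<le> B * \<rho> ^ n" for n x
  proof (induction n arbitrary: x)
    case 0
    then show ?case using le_B by simp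
  next
    case (Suc n)
    have "c \<le> 2 ^ n * c" using \<open>c > 0\<close> by simp
    with Suc.prems have "c \<le> x / 2" "2 ^ n * c \<le> x / 2" by auto
    then have "\<phi> x \<le> \<rho> * \<phi> (x / 2)" using contraction[of "x / 2"] by simp
    also have "\<dots> \<le> \<rho> * (B * \<rho> ^ n)"
      using Suc.IH[OF \<open>2 ^ n * c \<le> x / 2\<close>] \<open>0 \<le> \<rho>\<close> by (rule mult_left_mono)
    finally show ?case by (simp add: algebra_simps)
  qed
  have "0 \<le> B" using nonneg[of c] bounded[of c] \<open>c > 0\<close> by simp
  show ?thesis
  proof (rule tendstoI)
    fix e :: real assume "e > 0"
    obtain n where n: "\<rho> ^ n < e / (B + 1)"
      using real_arch_pow_inv[of "e / (B + 1)" \<rho>] \<open>e > 0\<close> \<open>0 \<le> B\<close> assms(2,3) by auto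
    have Bn: "B * \<rho> ^ n < e"
      using n \<open>0 \<le> B\<close> \<open>0 \<le> \<rho>\<close> by (simp add: field_simps) (smt (verit) mult_right_mono zero_le_power)
    show "eventually (\<lambda>x. dist (\<phi> x) 0 < e) at_top"
      using eventually_ge_at_top[of "2 ^ n * c"]
    proof eventually_elim
      case (elim x)
      have "c \<le> x" using elim \<open>c > 0\<close> by (smt (verit) mult_le_cancel_right1 one_le_power)
      then show ?case using decay[OF elim] nonneg Bn by simp
    qed
  qed
qed

lemma slowly_varying_power_div_tendsto_0:
  fixes L :: "real \<Rightarrow> real"
  assumes "slowly_varying L" "mono L" "\<And>x. L x > 0"
  shows "((\<lambda>x. L x ^ k / x) \<longlongrightarrow> 0) at_top"
proof -
  have "((\<lambda>u. (L (u * 2) / L u) ^ k) \<longlongrightarrow> 1 ^ k) at_top"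
    using assms(1) unfolding slowly_varying_def by (intro tendsto_power) simp
  then have "eventually (\<lambda>u. (L (u * 2) / L u) ^ k < 3 / 2) at_top"
    by (rule order_tendstoD) simp
  then obtain c0 where c0: "\<And>u. c0 \<le> u \<Longrightarrow> (L (u * 2) / L u) ^ k < 3 / 2"
    by (auto simp: eventually_at_top_linorder)
  define c where "c = max c0 1"
  show ?thesis
  proof (rule dyadic_contraction_tendsto_0)
    show "c > 0" "(0::real) \<le> 3 / 4" "(3::real) / 4 < 1" by (auto simp: c_def)
    show "0 \<le> L x ^ k / x" if "c \<le> x" for x
      using that assms(3)[of x] by (simp add: c_def)
    show "L x ^ k / x \<le> L (2 * c) ^ k / c" if "c \<le> x" "x \<le> 2 * c" for x
      using that assms(3)[of x] monoD[OF assms(2), of x "2 * c"]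
      by (intro frac_le power_mono) (auto simp: c_def)
    show "L (2 * x) ^ k / (2 * x) \<le> 3 / 4 * (L x ^ k / x)" if "c \<le> x" for x
    proof -
      have "L (2 * x) ^ k < 3 / 2 * L x ^ k"
        using c0[of x] that assms(3)[of x] by (simp add: c_def power_divide field_simps mult.commute)
      then show ?thesis using that by (simp add: c_def field_simps)
    qed
  qed
qed

section \<open>The level \<open>\<ell>\<^sub>t\<close>\<close>

lemma mult_less_below_ell:
  assumes "0 \<le> s" "s < ell L t"
  shows "s * L s < t"
proof (rule ccontr)
  assume "\<not> s * L s < t"
  with assms(1) have "ell L t \<le> s"
    unfolding ell_def by (intro cInf_lower) (auto simp: bdd_below_def)
  with assms(2) show False by simp
qed

lemma le_mult_above_ell:
  assumes "mono L" "\<And>x. L x \<ge> 1" "ell L t < s"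
  shows "t \<le> s * L s"
proof -
  let ?S = "{s. 0 \<le> s \<and> t \<le> s * L s}"
  have "max t 0 \<in> ?S"
    using assms(2)[of "max t 0"] by (auto simp: max_def)
  moreover have "bdd_below ?S" by (rule bdd_belowI[of _ 0]) simp
  ultimately obtain s' where s': "s' \<in> ?S" "s' < s"
    using assms(3) cInf_less_iff[of ?S s] unfolding ell_def by blast
  then have "s' * L s' \<le> s * L s"
    using monoD[OF assms(1), of s' s] assms(2)[of s'] by (intro mult_mono) auto
  with s' show ?thesis by simp
qed

lemma ell_at_top:
  assumes "mono L" "\<And>x. L x \<ge> 1"
  shows "filterlim (ell L) at_top at_top"
  unfolding filterlim_at_top
proof
  fix B :: real
  show "eventually (\<lambda>t. B \<le> ell L t) at_top"
    using eventually_gt_at_top[of "(B + 1) * L (B + 1)"]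
  proof eventually_elim
    case (elim t)
    show ?case
      using le_mult_above_ell[OF assms, of t "B + 1"] elim by linarith
  qed
qed

definition truncated :: "real \<Rightarrow> real \<Rightarrow> real" where
  "truncated a x = (if 0 \<le> x \<and> x \<le> a then x else 0)"

lemma truncated_measurable [measurable]: "truncated a \<in> borel_measurable borel"
  unfolding truncated_def by measurable

lemma truncated_nonneg: "0 \<le> truncated a x"
  by (simp add: truncated_def)

lemma le_truncated: "x \<le> a \<Longrightarrow> x \<le> truncated a x"
  by (simp add: truncated_def)

lemma truncated_le: "0 \<le> a \<Longrightarrow> truncated a x \<le> a"
  by (simp add: truncated_def)

lemma (in prob_space) integrable_truncated:
  "f \<in> borel_measurable M \<Longrightarrow> integrable M (\<lambda>\<omega>. truncated a (f \<omega>))"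
  by (rule integrable_const_bound[where B = "\<bar>a\<bar>"]) (auto simp: truncated_def)

lemma one_minus_power_le_exp:
  fixes x :: real
  assumes "0 \<le> x" "x \<le> 1"
  shows "(1 - x) ^ n \<le> exp (- (n * x))"
proof -
  have "(1 - x) ^ n \<le> exp (- x) ^ n"
    using assms exp_ge_add_one_self[of "- x"] by (intro power_mono) auto
  then show ?thesis by (simp add: exp_of_nat_mult[symmetric])
qed

lemma mult_one_minus_power_ge:
  fixes p q s :: real
  assumes "0 \<le> p" "p \<le> 1" "0 \<le> q" "q \<le> 1" "s \<le> N * p"
  shows "q - exp (- s) \<le> q * (1 - (1 - p) ^ N)"
proof -
  have "(1 - p) ^ N \<le> exp (- (N * p))"
    using assms(1,2) by (rule one_minus_power_le_exp)
  also have "\<dots> \<le> exp (- s)"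
    using assms(5) by simp
  finally have "(1 - p) ^ N \<le> exp (- s)" .
  moreover have "q * (1 - p) ^ N \<le> (1 - p) ^ N"
    using assms(2-4) by (intro mult_left_le_one_le) auto
  ultimately show ?thesis by (simp add: right_diff_distrib)
qed

lemma truncation_error_le:
  fixes h r l x0 La F :: real and N :: nat
  assumes "2 \<le> h" "h\<^sup>2 \<le> r" "0 < l" "0 \<le> x0" "r / 2 \<le> La"
    and "N \<le> 2 * r * sqrt h" "F \<le> 2 * x0 + 5 * (l / h ^ 3) / La"
  shows "N * F / (l / (8 * h\<^sup>2)) \<le> 32 * x0 * r ^ 3 / l + 160 / sqrt h"
proof -
  have "0 < h" using assms(1) by simp
  then have "0 < r" using assms(2) by (smt (verit) zero_less_power)
  with assms(5) have "0 < La" by simp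
  have "h \<le> h\<^sup>2"
    using assms(1) mult_right_mono[of 1 h h] by (simp add: power2_eq_square)
  then have "sqrt h \<le> h" "h \<le> r"
    using assms(2) \<open>0 < h\<close> real_sqrt_le_mono[of h "h\<^sup>2"] by auto
  have "N * F / (l / (8 * h\<^sup>2)) = N * F * 8 * h\<^sup>2 / l"
    using \<open>0 < h\<close> by simp
  also have "\<dots> \<le> N * (2 * x0 + 5 * (l / h ^ 3) / La) * 8 * h\<^sup>2 / l"
    using assms(3,7) by (intro divide_right_mono mult_right_mono mult_left_mono) auto
  also have "\<dots> = 16 * x0 * N * h\<^sup>2 / l + 40 * N / (h * La)"
    using \<open>0 < h\<close> \<open>0 < La\<close> \<open>0 < l\<close> by (simp add: field_simps power2_eq_square power3_eq_cube)
  also have "16 * x0 * N * h\<^sup>2 / l \<le> 16 * x0 * (2 * r * sqrt h) * h\<^sup>2 / l"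
    using assms(3,4,6) by (intro divide_right_mono mult_right_mono mult_left_mono) auto
  also have "\<dots> \<le> 32 * x0 * r ^ 3 / l"
  proof -
    have "sqrt h * h\<^sup>2 \<le> r * r"
      using \<open>sqrt h \<le> h\<close> \<open>h \<le> r\<close> assms(2) \<open>0 < h\<close> by (intro mult_mono) auto
    then have "x0 * (r * (sqrt h * h\<^sup>2)) \<le> x0 * (r * (r * r))"
      using assms(4) \<open>0 < r\<close> by (intro mult_left_mono) auto
    then show ?thesis
      using assms(3) by (intro divide_right_mono) (auto simp: power3_eq_cube)
  qed
  also have "40 * N / (h * La) \<le> 40 * (2 * r * sqrt h) / (h * (r / 2))"
    using assms(5,6) \<open>0 < h\<close> \<open>0 < r\<close> by (intro frac_le mult_left_mono) auto
  also have "\<dots> = 160 / sqrt h"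
    using \<open>0 < h\<close> \<open>0 < r\<close> by (simp add: field_simps)
  finally show ?thesis by simp
qed

lemma maxY_eq: "maxY Y n \<omega> = Max ((\<lambda>i. Y i \<omega>) ` {..n})"
  unfolding maxY_def by (rule arg_cong[where f = Max]) auto

lemma first_exc_eqI:
  assumes "\<forall>i<n. Y i \<omega> \<le> a" "l < Y n \<omega>" "a \<le> l"
  shows "first_exc Y l \<omega> = n"
  unfolding first_exc_def
proof (rule Least_equality)
  show "l < maxY Y n \<omega>"
    unfolding maxY_eq using assms(2) by (subst Max_gr_iff) auto
next
  fix m assume "l < maxY Y m \<omega>"
  then obtain i where "i \<le> m" "l < Y i \<omega>"
    unfolding maxY_eq by (subst (asm) Max_gr_iff) auto
  with assms(1,3) show "n \<le> m" by (meson le_less_trans linorder_not_less order.trans)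
qed

section \<open>The i.i.d. sequence and its first large jump\<close>

locale iid_slowly_varying = prob_space M for M :: "'a measure" +
  fixes \<sigma>0 :: "'a \<Rightarrow> real" and Y :: "nat \<Rightarrow> 'a \<Rightarrow> real"
  assumes \<sigma>0_measurable [measurable]: "\<sigma>0 \<in> borel_measurable M"
    and Y_measurable [measurable]: "\<And>i. Y i \<in> borel_measurable M"
    and indep_Y: "indep_vars (\<lambda>_. borel) Y UNIV"
    and distr_Y: "\<And>i. distr M borel (Y i) = distr M borel \<sigma>0"
    and slowly_varying_L: "slowly_varying (tailL M \<sigma>0)"
begin

abbreviation L :: "real \<Rightarrow> real" where
  "L \<equiv> tailL M \<sigma>0"

definition tail :: "real \<Rightarrow> real" where
  "tail x = prob {\<omega> \<in> space M. x < \<sigma>0 \<omega>}"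

definition trunc_mean :: "real \<Rightarrow> real" where
  "trunc_mean a = expectation (\<lambda>\<omega>. truncated a (\<sigma>0 \<omega>))"

lemma expectation_eq_\<sigma>0:
  fixes f :: "real \<Rightarrow> real"
  assumes [measurable]: "f \<in> borel_measurable borel"
  shows "expectation (\<lambda>\<omega>. f (Y i \<omega>)) = expectation (\<lambda>\<omega>. f (\<sigma>0 \<omega>))"
proof -
  have "expectation (\<lambda>\<omega>. f (Y i \<omega>)) = integral\<^sup>L (distr M borel (Y i)) f"
    by (rule integral_distr[symmetric]) simp_all
  also have "\<dots> = integral\<^sup>L (distr M borel \<sigma>0) f"
    by (simp add: distr_Y)
  also have "\<dots> = expectation (\<lambda>\<omega>. f (\<sigma>0 \<omega>))"
    by (rule integral_distr) simp_all
  finally show ?thesis .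
qed

lemma prob_Y_gt: "prob {\<omega> \<in> space M. x < Y i \<omega>} = tail x"
proof -
  have "prob {\<omega> \<in> space M. x < Y i \<omega>} = measure (distr M borel (Y i)) {x<..}"
    by (subst measure_distr) (auto intro!: arg_cong[where f = prob])
  also have "\<dots> = tail x"
    unfolding distr_Y tail_def by (subst measure_distr) (auto intro!: arg_cong[where f = prob])
  finally show ?thesis .
qed

lemma prob_Y_le: "prob {\<omega> \<in> space M. Y i \<omega> \<le> x} = 1 - tail x"
proof -
  have "{\<omega> \<in> space M. Y i \<omega> \<le> x} = space M - {\<omega> \<in> space M. x < Y i \<omega>}" by auto
  then show ?thesis using prob_compl[of "{\<omega> \<in> space M. x < Y i \<omega>}"] prob_Y_gt by simp
qed

lemma trunc_mean_Y: "expectation (\<lambda>\<omega>. truncated a (Y i \<omega>)) = trunc_mean a"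
  unfolding trunc_mean_def by (rule expectation_eq_\<sigma>0) simp

lemma tail_antimono: "x \<le> y \<Longrightarrow> tail y \<le> tail x"
  unfolding tail_def by (intro finite_measure_mono) auto

lemma tail_nonneg: "0 \<le> tail x"
  by (simp add: tail_def)

lemma tail_le_1: "tail x \<le> 1"
  by (simp add: tail_def)

lemma L_eq: "L x = 1 / tail x"
  unfolding tailL_def tail_def by simp

text \<open>If some tail probability vanished, \<open>L\<close> would take the junk value \<open>1 / 0 = 0\<close> from
  there on and the ratios \<open>L (2 u) / L u\<close> could not tend to \<open>1\<close>.\<close>
lemma tail_pos: "0 < tail x"
proof (rule ccontr)
  assume "\<not> 0 < tail x"
  then have vanish: "tail y = 0" if "x \<le> y" for y
    using tail_antimono[OF that] tail_nonneg[of x] tail_nonneg[of y] by linarith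
  have ev: "eventually (\<lambda>u. L (u * 2) / L u = 0) at_top"
    using eventually_ge_at_top[of "max x 0"] by eventually_elim (simp add: L_eq vanish)
  have "((\<lambda>u. L (u * 2) / L u) \<longlongrightarrow> 1) at_top"
    using slowly_varying_L unfolding slowly_varying_def by auto
  then have "((\<lambda>u::real. 0) \<longlongrightarrow> (1::real)) at_top"
    unfolding tendsto_cong[OF ev] .
  then show False
    using tendsto_const_iff[OF trivial_limit_at_top_linorder[where 'a = real], of "0::real" 1]
    by simp
qed

lemma L_ge_1: "1 \<le> L x"
  using tail_pos[of x] tail_le_1[of x] by (simp add: L_eq)

lemma L_pos: "0 < L x"
  using L_ge_1[of x] by simp

lemma mono_L: "mono L"
  unfolding L_eq by (intro monoI divide_left_mono tail_antimono) (auto simp: tail_pos)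

lemma tail_doubling: "\<exists>x0>0. \<forall>x\<ge>x0. tail x \<le> 11 / 10 * tail (2 * x)"
proof -
  have "((\<lambda>u. L (u * 2) / L u) \<longlongrightarrow> 1) at_top"
    using slowly_varying_L unfolding slowly_varying_def by simp
  then have "eventually (\<lambda>u. L (u * 2) / L u < 11 / 10) at_top"
    by (rule order_tendstoD) simp
  then obtain x1 where "\<And>x. x1 \<le> x \<Longrightarrow> L (x * 2) / L x < 11 / 10"
    by (auto simp: eventually_at_top_linorder)
  moreover have "L (x * 2) / L x = tail x / tail (2 * x)" for x
    by (simp add: L_eq mult.commute)
  ultimately have "tail x \<le> 11 / 10 * tail (2 * x)" if "x1 \<le> x" for x
    using that tail_pos[of "2 * x"] by (smt (verit) pos_divide_less_eq)
  then show ?thesis by (intro exI[of _ "max x1 1"]) simp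
qed

lemma trunc_mean_le: "0 \<le> a \<Longrightarrow> trunc_mean a \<le> a"
  using integral_mono[OF integrable_truncated integrable_const, of \<sigma>0 a a] truncated_le
  by (simp add: trunc_mean_def prob_space)

lemma trunc_mean_le_half:
  assumes "0 \<le> a"
  shows "trunc_mean a \<le> trunc_mean (a / 2) + a * tail (a / 2)"
proof -
  define A where "A = {\<omega> \<in> space M. a / 2 < \<sigma>0 \<omega>}"
  have A [measurable]: "A \<in> sets M" unfolding A_def by measurable
  have "trunc_mean a \<le> expectation (\<lambda>\<omega>. truncated (a / 2) (\<sigma>0 \<omega>) + a * indicator A \<omega>)"
    unfolding trunc_mean_def
    using assms by (intro integral_mono integrable_truncated Bochner_Integration.integrable_add
        integrable_mult_right integrable_real_indicator)
      (auto simp: truncated_def A_def indicator_def less_top[symmetric])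
  also have "\<dots> = trunc_mean (a / 2) + a * prob A"
    by (subst Bochner_Integration.integral_add)
      (auto intro!: integrable_truncated integrable_real_indicator
        simp: trunc_mean_def less_top[symmetric])
  finally show ?thesis by (simp add: A_def tail_def)
qed

lemma trunc_mean_bound:
  assumes "0 < x0" and doubling: "\<And>x. x0 \<le> x \<Longrightarrow> tail x \<le> 11 / 10 * tail (2 * x)"
  shows "0 \<le> a \<Longrightarrow> trunc_mean a \<le> 2 * x0 + 5 * a * tail a"
  using \<open>0 < x0\<close>
proof (induction a rule: dyadic_induct)
  case (base a)
  then show ?case
    using trunc_mean_le[of a] mult_nonneg_nonneg[OF base.prems tail_nonneg[of a]] by linarith
next
  case (step a)
  then have "x0 \<le> a / 2" by simp
  have "trunc_mean a \<le> trunc_mean (a / 2) + a * tail (a / 2)"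
    using step by (intro trunc_mean_le_half) simp
  also have "\<dots> \<le> 2 * x0 + 7 / 2 * a * tail (a / 2)"
    using step by simp
  also have "\<dots> \<le> 2 * x0 + 7 / 2 * a * (11 / 10 * tail a)"
    using doubling[OF \<open>x0 \<le> a / 2\<close>] step.prems by (intro add_left_mono mult_left_mono) auto
  also have "\<dots> \<le> 2 * x0 + 5 * a * tail a"
    using step.prems tail_nonneg[of a] by (simp add: mult_right_mono)
  finally show ?case .
qed

lemma sl_measurable [measurable]: "sl Y l \<in> borel_measurable M"
proof -
  have [measurable]: "maxY Y n \<in> borel_measurable M" for n
    unfolding maxY_eq[abs_def] by measurable
  have [measurable]: "first_exc Y l \<in> measurable M (count_space UNIV)"
    unfolding first_exc_def[abs_def] by measurable
  have "(\<lambda>\<omega>. (\<lambda>n \<omega>. \<Sum>i<n. Y i \<omega>) (first_exc Y l \<omega>) \<omega>) \<in> borel_measurable M"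
    by (rule measurable_compose_countable) measurable
  then show ?thesis unfolding sl_def[abs_def] by simp
qed

definition jump_at :: "real \<Rightarrow> real \<Rightarrow> nat \<Rightarrow> 'a set" where
  "jump_at a l n = {\<omega> \<in> space M. (\<forall>i<n. Y i \<omega> \<le> a) \<and> l < Y n \<omega>}"

lemma jump_at_measurable [measurable]: "jump_at a l n \<in> sets M"
  unfolding jump_at_def by measurable

lemma prob_jump_at: "prob (jump_at a l n) = (1 - tail a) ^ n * tail l"
proof -
  define B where "B j = (if j < n then {..a} else {l<..})" for j
  have B_borel: "B j \<in> sets borel" for j
    by (simp add: B_def)
  have "jump_at a l n = (\<Inter>j\<in>{..n}. Y j -` B j \<inter> space M)"
    unfolding jump_at_def B_def by (auto simp: not_less dest: le_neq_trans) (metis atMost_iff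
        atMost_subset_iff lessThan_subset_iff less_imp_le_nat subsetD lessThan_iff)
  moreover have "indep_sets (\<lambda>i. {Y i -` A \<inter> space M | A. A \<in> sets borel}) UNIV"
    using indep_Y unfolding indep_vars_def2 by auto
  then have "prob (\<Inter>j\<in>{..n}. Y j -` B j \<inter> space M) = (\<Prod>j\<in>{..n}. prob (Y j -` B j \<inter> space M))"
    by (intro indep_setsD) (use B_borel in blast)+
  moreover have "Y j -` B j \<inter> space M = {\<omega> \<in> space M. Y j \<omega> \<le> a}" if "j < n" for j
    using that by (auto simp: B_def)
  moreover have "Y n -` B n \<inter> space M = {\<omega> \<in> space M. l < Y n \<omega>}"
    by (auto simp: B_def)
  ultimately show ?thesis
    by (simp add: lessThan_Suc_atMost[symmetric] prob_Y_le prob_Y_gt)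
qed

lemma prob_jump_before:
  assumes "a \<le> l"
  shows "prob (\<Union>n<N. jump_at a l n) = tail l / tail a * (1 - (1 - tail a) ^ N)"
proof -
  have "jump_at a l m \<inter> jump_at a l n = {}" if "m < n" for m n
    using that assms by (force simp: jump_at_def)
  then have "disjoint_family_on (jump_at a l) {..<N}"
    unfolding disjoint_family_on_def by (metis Int_commute linorder_neqE_nat)
  then have "prob (\<Union>n<N. jump_at a l n) = (\<Sum>n<N. (1 - tail a) ^ n) * tail l"
    by (subst finite_measure_finite_Union) (auto simp: prob_jump_at sum_distrib_right)
  also have "\<dots> = tail l / tail a * (1 - (1 - tail a) ^ N)"
    using tail_pos[of a] by (subst sum_gp_strict) simp
  finally show ?thesis .
qed

lemma sl_le_truncated_sum:
  assumes "\<omega> \<in> jump_at a l n" "a \<le> l"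
  shows "sl Y l \<omega> \<le> (\<Sum>i<n. truncated a (Y i \<omega>))"
proof -
  have "first_exc Y l \<omega> = n"
    using assms by (intro first_exc_eqI[where a = a]) (auto simp: jump_at_def)
  then show ?thesis
    using assms(1) unfolding sl_def jump_at_def by (auto intro!: sum_mono le_truncated)
qed

text \<open>On the event that a jump above \<open>l\<close> occurs among the first \<open>N\<close> values after only values below
  \<open>a\<close>, the sum \<open>sl Y l\<close> is dominated by the sum \<open>Z\<close> of the first \<open>N\<close> values truncated at \<open>a\<close>;
  Markov's inequality controls \<open>Z\<close>.\<close>
lemma prob_sl_less_ge:
  assumes "0 < a" "a \<le> l" "0 < c"
  shows "tail l / tail a * (1 - (1 - tail a) ^ N) - N * trunc_mean a / c
    \<le> prob {\<omega> \<in> space M. sl Y l \<omega> < c}"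
proof -
  define U where "U = (\<Union>n<N. jump_at a l n)"
  define Z where "Z \<omega> = (\<Sum>i<N. truncated a (Y i \<omega>))" for \<omega>
  define big where "big = {\<omega> \<in> space M. c \<le> Z \<omega>}"
  have [measurable]: "U \<in> sets M" "big \<in> sets M"
    unfolding U_def big_def Z_def by measurable
  have "integrable M Z"
    unfolding Z_def by (auto intro!: integrable_truncated)
  moreover have "AE \<omega> in M. 0 \<le> Z \<omega>"
    by (simp add: Z_def truncated_nonneg sum_nonneg)
  ultimately have "prob big \<le> expectation Z / c"
    unfolding big_def by (rule integral_Markov_inequality_measure[OF _ sets.top _ \<open>0 < c\<close>])
  also have "expectation Z = N * trunc_mean a"
    unfolding Z_def by (simp add: trunc_mean_Y Bochner_Integration.integral_sum[OF integrable_truncated])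
  finally have "prob big \<le> N * trunc_mean a / c" .
  moreover have "U - big \<subseteq> {\<omega> \<in> space M. sl Y l \<omega> < c}"
  proof
    fix \<omega> assume "\<omega> \<in> U - big"
    then obtain n where n: "n < N" "\<omega> \<in> jump_at a l n" "Z \<omega> < c" "\<omega> \<in> space M"
      unfolding U_def big_def by (auto simp: jump_at_def)
    have "sl Y l \<omega> \<le> (\<Sum>i<n. truncated a (Y i \<omega>))"
      using n(2) \<open>a \<le> l\<close> by (rule sl_le_truncated_sum)
    also have "\<dots> \<le> Z \<omega>"
      unfolding Z_def using n(1) by (intro sum_mono2) (auto simp: truncated_nonneg)
    finally show "\<omega> \<in> {\<omega> \<in> space M. sl Y l \<omega> < c}" using n by simp
  qed
  then have "prob (U - big) \<le> prob {\<omega> \<in> space M. sl Y l \<omega> < c}"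
    by (intro finite_measure_mono) auto
  moreover have "prob U \<le> prob ((U - big) \<union> big)"
    by (intro finite_measure_mono) auto
  moreover have "prob ((U - big) \<union> big) \<le> prob (U - big) + prob big"
    by (intro measure_Un_le) auto
  ultimately show ?thesis
    using prob_jump_before[OF \<open>a \<le> l\<close>, of N] unfolding U_def by linarith
qed

text \<open>Take \<open>a = l / h\<^sup>3\<close>, \<open>c = l / (8 h\<^sup>2)\<close> and \<open>N \<approx> L l * sqrt h\<close> in the previous bound:
  a jump above \<open>l\<close> then occurs within \<open>N\<close> steps with probability about \<open>L a / L l \<ge> 1 - 1 / h\<close>,
  and the truncated sum of \<open>N\<close> values exceeds \<open>c\<close> only with small probability.\<close>
lemma prob_sl_less_ge_scaled:
  assumes "0 < x0" and doubling: "\<And>x. x0 \<le> x \<Longrightarrow> tail x \<le> 11 / 10 * tail (2 * x)"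
    and "2 \<le> h" "0 < l" "h\<^sup>2 \<le> L l" "L l * (1 - 1 / h) < L (l / h ^ 3)"
  shows "1 - 1 / h - exp (- sqrt h) - (32 * x0 * L l ^ 3 / l + 160 / sqrt h)
    \<le> prob {\<omega> \<in> space M. sl Y l \<omega> < l / (8 * h\<^sup>2)}"
proof -
  define a where "a = l / h ^ 3"
  define r where "r = L l"
  define N where "N = nat \<lceil>r * sqrt h\<rceil>"
  have "0 < h" "1 \<le> r" "1 \<le> sqrt h" using \<open>2 \<le> h\<close> L_ge_1 by (auto simp: r_def)
  have "1 \<le> h ^ 3" using \<open>2 \<le> h\<close> by (simp add: one_le_power)
  then have "0 < a" "a \<le> l" using \<open>0 < l\<close> \<open>0 < h\<close> by (auto simp: a_def divide_le_eq)
  have "L a \<le> r" unfolding r_def by (rule monoD[OF mono_L \<open>a \<le> l\<close>])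
  have "r * (1 - 1 / h) < L a" using assms(6) by (simp add: a_def r_def)
  moreover have "r / 2 \<le> r * (1 - 1 / h)" using \<open>2 \<le> h\<close> \<open>1 \<le> r\<close> by (simp add: field_simps)
  ultimately have "r / 2 \<le> L a" by linarith
  have tail_ratio: "tail l / tail a = L a / r"
    using tail_pos[of l] tail_pos[of a] by (simp add: L_eq r_def)
  have "1 \<le> r * sqrt h" using \<open>1 \<le> r\<close> \<open>1 \<le> sqrt h\<close> by (metis mult_mono' mult_1 zero_le_one)
  then have "real N = \<lceil>r * sqrt h\<rceil>" by (simp add: N_def)
  then have "r * sqrt h \<le> N" "N \<le> r * sqrt h + 1" by linarith+
  have "sqrt h \<le> N * tail a"
  proof -
    have "sqrt h \<le> r * sqrt h / L a"
      using \<open>L a \<le> r\<close> \<open>r / 2 \<le> L a\<close> \<open>1 \<le> r\<close> \<open>1 \<le> sqrt h\<close> by (simp add: field_simps mult_right_mono)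
    also have "\<dots> \<le> N / L a" using \<open>r * sqrt h \<le> N\<close> \<open>r / 2 \<le> L a\<close> \<open>1 \<le> r\<close> by (simp add: divide_right_mono)
    finally show ?thesis using tail_pos[of a] by (simp add: L_eq)
  qed
  have "1 - 1 / h \<le> L a / r" "L a / r \<le> 1"
    using \<open>r * (1 - 1 / h) < L a\<close> \<open>L a \<le> r\<close> \<open>1 \<le> r\<close> by (simp_all add: field_simps)
  have "L a / r - exp (- sqrt h) \<le> L a / r * (1 - (1 - tail a) ^ N)"
    using tail_nonneg tail_le_1 _ \<open>L a / r \<le> 1\<close> \<open>sqrt h \<le> N * tail a\<close>
    by (rule mult_one_minus_power_ge) (use L_pos[of a] \<open>1 \<le> r\<close> in simp)
  with \<open>1 - 1 / h \<le> L a / r\<close>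
  have "1 - 1 / h - exp (- sqrt h) \<le> tail l / tail a * (1 - (1 - tail a) ^ N)"
    unfolding tail_ratio by linarith
  moreover have "N * trunc_mean a / (l / (8 * h\<^sup>2)) \<le> 32 * x0 * r ^ 3 / l + 160 / sqrt h"
  proof (rule truncation_error_le)
    show "N \<le> 2 * r * sqrt h" using \<open>N \<le> r * sqrt h + 1\<close> \<open>1 \<le> r * sqrt h\<close> by simp
    show "trunc_mean a \<le> 2 * x0 + 5 * (l / h ^ 3) / L a"
      using trunc_mean_bound[OF \<open>0 < x0\<close> doubling, of a] \<open>0 < a\<close> tail_pos[of a]
      by (simp add: L_eq a_def)
  qed (use assms \<open>r / 2 \<le> L a\<close> in \<open>auto simp: r_def\<close>)
  ultimately show ?thesis
    using prob_sl_less_ge[OF \<open>0 < a\<close> \<open>a \<le> l\<close>, of "l / (8 * h\<^sup>2)" N] \<open>0 < l\<close> \<open>0 < h\<close>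
    by (simp add: r_def)
qed

lemma ell_mult_L_ell_le:
  assumes "0 < ell L t" "2 \<le> h" "L (ell L t) * (1 - 1 / h) < L (ell L t / h ^ 3)"
  shows "ell L t * L (ell L t) \<le> 4 * t"
proof -
  define l where "l = ell L t"
  have "2 \<le> h ^ 3"
    using \<open>2 \<le> h\<close> power_increasing[of 1 3 h] by simp
  then have "l / h ^ 3 \<le> l / 2"
    using \<open>0 < ell L t\<close> \<open>2 \<le> h\<close> by (intro divide_left_mono) (simp_all add: l_def)
  have "1 / 2 \<le> 1 - 1 / h" using \<open>2 \<le> h\<close> by simp
  then have "L l / 2 \<le> L l * (1 - 1 / h)"
    using mult_left_mono[of "1 / 2" "1 - 1 / h" "L l"] L_pos[of l] by simp
  also have "\<dots> < L (l / h ^ 3)" using assms(3) by (simp add: l_def)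
  also have "\<dots> \<le> L (l / 2)" using \<open>l / h ^ 3 \<le> l / 2\<close> by (rule monoD[OF mono_L])
  finally have "l * L l \<le> l * (2 * L (l / 2))"
    using \<open>0 < ell L t\<close> by (intro mult_left_mono) (auto simp: l_def)
  moreover have "l / 2 * L (l / 2) < t"
    using \<open>0 < ell L t\<close> by (intro mult_less_below_ell) (auto simp: l_def)
  ultimately show ?thesis by (simp add: l_def)
qed

lemma prob_sl_small_ge:
  assumes "0 < x0" and doubling: "\<And>x. x0 \<le> x \<Longrightarrow> tail x \<le> 11 / 10 * tail (2 * x)"
    and "2 \<le> h" "0 < ell L t" "h\<^sup>2 \<le> rr L t"
    and "L (ell L t) * (1 - 1 / h) < L (ell L t / h ^ 3)"
  shows "1 - 1 / h - exp (- sqrt h) - (32 * x0 * L (ell L t) ^ 3 / ell L t + 160 / sqrt h)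
    \<le> prob {\<omega> \<in> space M. sl Y (ell L t) \<omega> < t / (2 * rr L t * h\<^sup>2)}"
proof -
  define l where "l = ell L t"
  have "l * L l \<le> 4 * t"
    unfolding l_def using assms(4,3,6) by (rule ell_mult_L_ell_le)
  have "0 < 2 * L l * h\<^sup>2" using L_pos[of l] \<open>2 \<le> h\<close> by simp
  have "l / (8 * h\<^sup>2) = l * L l / 4 / (2 * L l * h\<^sup>2)"
    using L_pos[of l] by simp
  also have "\<dots> \<le> t / (2 * L l * h\<^sup>2)"
    using \<open>l * L l \<le> 4 * t\<close> \<open>0 < 2 * L l * h\<^sup>2\<close> by (intro divide_right_mono) auto
  finally have "{\<omega> \<in> space M. sl Y l \<omega> < l / (8 * h\<^sup>2)}
      \<subseteq> {\<omega> \<in> space M. sl Y l \<omega> < t / (2 * L l * h\<^sup>2)}" by auto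
  then have "prob {\<omega> \<in> space M. sl Y l \<omega> < l / (8 * h\<^sup>2)}
      \<le> prob {\<omega> \<in> space M. sl Y l \<omega> < t / (2 * L l * h\<^sup>2)}"
    by (intro finite_measure_mono) simp_all
  moreover note prob_sl_less_ge_scaled[OF \<open>0 < x0\<close> doubling \<open>2 \<le> h\<close>, of l]
  ultimately show ?thesis
    using assms(4-6) by (simp add: l_def rr_def)
qed

lemma prob_sl_small_tendsto_1:
  fixes h :: "real \<Rightarrow> real"
  assumes h_at_top: "filterlim h at_top at_top"
    and h_small: "(\<lambda>t. (h t)\<^sup>2) \<in> o[at_top](\<lambda>t. rr L t)"
    and L_lower: "eventually (\<lambda>t. L (ell L t) * (1 - 1 / h t) < L (ell L t / h t ^ 3)) at_top"
  shows "((\<lambda>t. prob {\<omega> \<in> space M. sl Y (ell L t) \<omega> < t / (2 * rr L t * (h t)\<^sup>2)})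
    \<longlongrightarrow> 1) at_top"
proof -
  obtain x0 where "0 < x0" and doubling: "\<And>x. x0 \<le> x \<Longrightarrow> tail x \<le> 11 / 10 * tail (2 * x)"
    using tail_doubling by auto
  define err where "err t = 1 / h t + exp (- sqrt (h t))
    + (32 * x0 * (L (ell L t) ^ 3 / ell L t) + 160 / sqrt (h t))" for t
  have ell_at_top: "filterlim (ell L) at_top at_top"
    using mono_L L_ge_1 by (rule ell_at_top)
  have sqrt_h_at_top: "filterlim (\<lambda>t. sqrt (h t)) at_top at_top"
    using sqrt_at_top h_at_top by (rule filterlim_compose)
  have "filterlim (\<lambda>t. - sqrt (h t)) at_bot at_top"
    using sqrt_h_at_top by (simp add: filterlim_uminus_at_top)
  then have "((\<lambda>t. exp (- sqrt (h t))) \<longlongrightarrow> 0) at_top"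
    by (rule filterlim_compose[OF exp_at_bot])
  moreover have "((\<lambda>t. L (ell L t) ^ 3 / ell L t) \<longlongrightarrow> 0) at_top"
    using slowly_varying_power_div_tendsto_0[OF slowly_varying_L mono_L L_pos] ell_at_top
    by (rule filterlim_compose)
  moreover have "((\<lambda>t. 1 / h t) \<longlongrightarrow> 0) at_top" "((\<lambda>t. 160 / sqrt (h t)) \<longlongrightarrow> 0) at_top"
    using h_at_top sqrt_h_at_top
    by (auto intro!: tendsto_divide_0[OF tendsto_const] filterlim_at_top_imp_at_infinity)
  ultimately have "(err \<longlongrightarrow> 0 + 0 + (32 * x0 * 0 + 0)) at_top"
    unfolding err_def by (intro tendsto_add tendsto_mult tendsto_const)
  then have lower_tendsto: "((\<lambda>t. 1 - err t) \<longlongrightarrow> 1) at_top"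
    using tendsto_diff[OF tendsto_const, of err 0 _ 1] by simp
  have lower: "eventually (\<lambda>t. 1 - err t
      \<le> prob {\<omega> \<in> space M. sl Y (ell L t) \<omega> < t / (2 * rr L t * (h t)\<^sup>2)}) at_top"
    using h_at_top[unfolded filterlim_at_top, rule_format, of 2] landau_o.smallD[OF h_small zero_less_one]
      L_lower ell_at_top[unfolded filterlim_at_top, rule_format, of 1]
  proof eventually_elim
    case (elim t)
    then have "(h t)\<^sup>2 \<le> rr L t" using L_pos[of "ell L t"] by (simp add: rr_def)
    with elim show ?case
      using prob_sl_small_ge[OF \<open>0 < x0\<close> doubling, of "h t" t] by (simp add: err_def diff_diff_eq)
  qed
  have upper: "eventually (\<lambda>t. prob {\<omega> \<in> space M. sl Y (ell L t) \<omega> < t / (2 * rr L t * (h t)\<^sup>2)}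
      \<le> 1) at_top"
    by (simp add: prob_le_1)
  show ?thesis
    by (rule tendsto_sandwich[OF lower upper lower_tendsto tendsto_const])
qed

end

theorem proposition3p6:
  fixes M :: "'a measure" and \<sigma>0 :: "'a \<Rightarrow> real" and Y :: "nat \<Rightarrow> 'a \<Rightarrow> real"
    and h :: "real \<Rightarrow> real"
  assumes "prob_space M"
    and "\<sigma>0 \<in> borel_measurable M"
    and "\<forall>\<omega>\<in>space M. \<sigma>0 \<omega> > 0"
    and "slowly_varying (tailL M \<sigma>0)"
    and "\<And>i. Y i \<in> borel_measurable M"
    and "prob_space.indep_vars M (\<lambda>_. borel) Y UNIV"
    and "\<And>i. distr M borel (Y i) = distr M borel \<sigma>0"
    and "filterlim h at_top at_top"
    and "(\<lambda>t. (h t)\<^sup>2) \<in> o[at_top](\<lambda>t. rr (tailL M \<sigma>0) t)"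
    and "eventually (\<lambda>t.
           tailL M \<sigma>0 (ell (tailL M \<sigma>0) t / (h t)^3)
             > tailL M \<sigma>0 (ell (tailL M \<sigma>0) t) * (1 - 1 / h t)
         \<and> tailL M \<sigma>0 (ell (tailL M \<sigma>0) t * (h t)^3)
             < tailL M \<sigma>0 (ell (tailL M \<sigma>0) t) * (1 + 1 / h t)) at_top"
  shows "((\<lambda>t. measure M {\<omega> \<in> space M.
             sl Y (ell (tailL M \<sigma>0) t) \<omega>
               < t / (2 * rr (tailL M \<sigma>0) t * (h t)\<^sup>2)}) \<longlongrightarrow> 1) at_top"
proof -
  interpret iid_slowly_varying M \<sigma>0 Y
    using assms(1,2,4-7) by (simp add: iid_slowly_varying_def iid_slowly_varying_axioms_def)
  have "eventually (\<lambda>t. L (ell L t) * (1 - 1 / h t) < L (ell L t / h t ^ 3)) at_top"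
    using assms(10) by (rule eventually_mono) simp
  with assms(8,9) show ?thesis
    by (rule prob_sl_small_tendsto_1)
qed

end
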